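(* Let $M$ be a finite monoid and let $J$ be a $\mathscr{J}$-class of $M$. Then the relation $\theta_J$ is a congruence of $M$ and $\theta_J\subseteq\pi_J$.
   Context: Green's relations on $M$: $a\mathscr{L}b$ iff $Ma=Mb$, $a\mathscr{R}b$ iff $aM=bM$, $a\mathscr{H}b$ iff $a\mathscr{L}b$ and $a\mathscr{R}b$, $a\mathscr{J}b$ iff $MaM=MbM$. $J_a$ is the $\mathscr{J}$-class of $a$; $J_a\leqslant_{\mathscr{J}}J_b$ iff $MaM\subseteq MbM$, and $J_a<_{\mathscr{J}}J_b$ iff $J_a\leqslant_{\mathscr{J}}J_b$ and $J_a\neq J_b$. For a $\mathscr{J}$-class $J$, let $A(J)=\{a\in M: J_a<_{\mathscr{J}}J\}$ and $B(J)=\{a\in M: J\not\leqslant_{\mathscr{J}}J_a\}$. Define $a\,\theta_J\, b$ [respectively $a\,\pi_J\,b$] iff $a=b$, or $a,b\in A(J)$ [respectively $a,b\in B(J)$], or $a,b\in J$ and $a\mathscr{H}b$. *)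

theory Defs
  imports Main
begin

text \<open>A finite monoid M is modelled as a type of class monoid_mult and finite
  (the monoid is the whole type; multiplication need not be commutative).\<close>

definition Lideal :: "'a::monoid_mult \<Rightarrow> 'a set" where
  "Lideal a = {x * a | x. True}"

definition Rideal :: "'a::monoid_mult \<Rightarrow> 'a set" where
  "Rideal a = {a * y | y. True}"

definition Jideal :: "'a::monoid_mult \<Rightarrow> 'a set" where
  "Jideal a = {x * a * y | x y. True}"

definition greenL :: "'a::monoid_mult \<Rightarrow> 'a \<Rightarrow> bool" where
  "greenL a b \<longleftrightarrow> Lideal a = Lideal b"

definition greenR :: "'a::monoid_mult \<Rightarrow> 'a \<Rightarrow> bool" where
  "greenR a b \<longleftrightarrow> Rideal a = Rideal b"

definition greenH :: "'a::monoid_mult \<Rightarrow> 'a \<Rightarrow> bool" where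
  "greenH a b \<longleftrightarrow> greenL a b \<and> greenR a b"

definition greenJ :: "'a::monoid_mult \<Rightarrow> 'a \<Rightarrow> bool" where
  "greenJ a b \<longleftrightarrow> Jideal a = Jideal b"

definition Jclass :: "'a::monoid_mult \<Rightarrow> 'a set" where
  "Jclass a = {b. greenJ a b}"

definition is_Jclass :: "'a::monoid_mult set \<Rightarrow> bool" where
  "is_Jclass J \<longleftrightarrow> (\<exists>a. J = Jclass a)"

definition Jclass_le :: "'a::monoid_mult set \<Rightarrow> 'a set \<Rightarrow> bool" where
  "Jclass_le X Y \<longleftrightarrow> (\<exists>a b. X = Jclass a \<and> Y = Jclass b \<and> Jideal a \<subseteq> Jideal b)"

definition Jclass_less :: "'a::monoid_mult set \<Rightarrow> 'a set \<Rightarrow> bool" where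
  "Jclass_less X Y \<longleftrightarrow> Jclass_le X Y \<and> X \<noteq> Y"

definition setA :: "'a::monoid_mult set \<Rightarrow> 'a set" where
  "setA J = {a. Jclass_less (Jclass a) J}"

definition setB :: "'a::monoid_mult set \<Rightarrow> 'a set" where
  "setB J = {a. \<not> Jclass_le J (Jclass a)}"

definition theta :: "'a::monoid_mult set \<Rightarrow> 'a rel" where
  "theta J = {(a, b). a = b \<or> (a \<in> setA J \<and> b \<in> setA J)
                      \<or> (a \<in> J \<and> b \<in> J \<and> greenH a b)}"

definition pi_rel :: "'a::monoid_mult set \<Rightarrow> 'a rel" where
  "pi_rel J = {(a, b). a = b \<or> (a \<in> setB J \<and> b \<in> setB J)
                      \<or> (a \<in> J \<and> b \<in> J \<and> greenH a b)}"

definition congruence :: "'a::monoid_mult rel \<Rightarrow> bool" where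
  "congruence R \<longleftrightarrow> equiv UNIV R \<and>
     (\<forall>a b c. (a, b) \<in> R \<longrightarrow> (c * a, c * b) \<in> R \<and> (a * c, b * c) \<in> R)"

end

theory Submission
  imports Defs
begin

text \<open>In a finite monoid \<open>a = xay\<close> forces \<open>a = x\<^sup>k a\<close> for some \<open>k > 0\<close>,
  hence stability: if \<open>ca\<close> is \<open>J\<close>-equivalent to \<open>a\<close>, it is \<open>L\<close>-equivalent to \<open>a\<close>
  (dually on the right). Let \<open>a H b\<close> in the \<open>J\<close>-class \<open>J\<close>. Then \<open>ca R cb\<close>, so
  \<open>ca\<close> and \<open>cb\<close> share a \<open>J\<close>-class, which lies below \<open>J\<close>. If it is \<open>J\<close> itself,
  stability gives \<open>ca L a L b L cb\<close>, so \<open>ca H cb\<close>; otherwise both lie in \<open>A(J)\<close>,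
  which is closed under multiplication. The inclusion \<open>\<theta>\<^sub>J \<subseteq> \<pi>\<^sub>J\<close> is
  \<open>A(J) \<subseteq> B(J)\<close>, i.e. antisymmetry of the \<open>J\<close>-order.\<close>

lemma mem_Lideal_iff: "b \<in> Lideal a \<longleftrightarrow> (\<exists>x. b = x * a)"
  by (simp add: Lideal_def)

lemma mem_Rideal_iff: "b \<in> Rideal a \<longleftrightarrow> (\<exists>y. b = a * y)"
  by (simp add: Rideal_def)

lemma mem_Jideal_iff: "b \<in> Jideal a \<longleftrightarrow> (\<exists>x y. b = x * a * y)"
  by (simp add: Jideal_def)

lemma mem_Lideal_self: "a \<in> Lideal (a::'a::monoid_mult)"
  unfolding mem_Lideal_iff by (metis mult_1_left)

lemma mem_Rideal_self: "a \<in> Rideal (a::'a::monoid_mult)"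
  unfolding mem_Rideal_iff by (metis mult_1_right)

lemma mem_Jideal_self: "a \<in> Jideal (a::'a::monoid_mult)"
  unfolding mem_Jideal_iff by (metis mult_1_left mult_1_right)

lemma Lideal_subset_iff: "Lideal b \<subseteq> Lideal a \<longleftrightarrow> b \<in> Lideal (a::'a::monoid_mult)"
  using mem_Lideal_self unfolding subset_iff mem_Lideal_iff by (metis mult.assoc)

lemma Rideal_subset_iff: "Rideal b \<subseteq> Rideal a \<longleftrightarrow> b \<in> Rideal (a::'a::monoid_mult)"
  using mem_Rideal_self unfolding subset_iff mem_Rideal_iff by (metis mult.assoc)

lemma Jideal_subset_iff: "Jideal b \<subseteq> Jideal a \<longleftrightarrow> b \<in> Jideal (a::'a::monoid_mult)"
  using mem_Jideal_self unfolding subset_iff mem_Jideal_iff by (metis mult.assoc)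

lemma Jideal_mult_subset: "Jideal (c * a * d) \<subseteq> Jideal (a::'a::monoid_mult)"
  unfolding Jideal_subset_iff mem_Jideal_iff by blast

lemma greenL_iff: "greenL a b \<longleftrightarrow> a \<in> Lideal b \<and> b \<in> Lideal (a::'a::monoid_mult)"
  unfolding greenL_def set_eq_subset Lideal_subset_iff by blast

lemma greenR_iff: "greenR a b \<longleftrightarrow> a \<in> Rideal b \<and> b \<in> Rideal (a::'a::monoid_mult)"
  unfolding greenR_def set_eq_subset Rideal_subset_iff by blast

lemma greenJ_iff: "greenJ a b \<longleftrightarrow> a \<in> Jideal b \<and> b \<in> Jideal (a::'a::monoid_mult)"
  unfolding greenJ_def set_eq_subset Jideal_subset_iff by blast

lemma greenL_imp_greenJ: "greenL a b \<Longrightarrow> greenJ a (b::'a::monoid_mult)"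
  unfolding greenL_iff greenJ_iff mem_Lideal_iff mem_Jideal_iff by (metis mult_1_right)

lemma greenR_imp_greenJ: "greenR a b \<Longrightarrow> greenJ a (b::'a::monoid_mult)"
  unfolding greenR_iff greenJ_iff mem_Rideal_iff mem_Jideal_iff by (metis mult_1_left)

lemma greenL_mult_right: "greenL a b \<Longrightarrow> greenL (a * c) (b * (c::'a::monoid_mult))"
  unfolding greenL_iff mem_Lideal_iff by (metis mult.assoc)

lemma greenR_mult_left: "greenR a b \<Longrightarrow> greenR (c * a) (c * (b::'a::monoid_mult))"
  unfolding greenR_iff mem_Rideal_iff by (metis mult.assoc)

lemma finite_power_period:
  fixes x :: "'a::{monoid_mult, finite}"
  obtains i k where "0 < k" "x ^ (i + k) = x ^ i"
proof -
  have "\<not> inj (\<lambda>n::nat. x ^ n)"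
    using finite_imageD[of "\<lambda>n::nat. x ^ n" UNIV] infinite_UNIV_nat by auto
  then obtain i j :: nat where "i < j" "x ^ j = x ^ i"
    unfolding inj_def by (metis linorder_neq_iff)
  then show thesis
    using that[of "j - i" i] by simp
qed

lemma power_sandwich: "a = x * a * y \<Longrightarrow> a = x ^ n * a * (y::'a::monoid_mult) ^ n"
proof (induction n)
  case (Suc n)
  then have "a = x ^ n * (x * a * y) * y ^ n"
    by simp
  then show ?case
    unfolding power_Suc2[of x] power_Suc[of y] by (simp add: mult.assoc)
qed simp

lemma sandwiched_imp_mem_Lideal:
  fixes a x y :: "'a::{monoid_mult, finite}"
  assumes "a = x * a * y"
  shows "a \<in> Lideal (x * a)"
proof -
  obtain i k where "0 < k" and period: "x ^ (i + k) = x ^ i"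
    by (rule finite_power_period)
  have sandwich: "x ^ i * a * y ^ i = a"
    using power_sandwich[OF assms] by simp
  have "x ^ k * a = x ^ k * (x ^ i * a * y ^ i)"
    using sandwich by simp
  also have "\<dots> = x ^ (i + k) * a * y ^ i"
    by (simp only: add.commute[of i k] power_add mult.assoc)
  also have "\<dots> = a"
    using period sandwich by simp
  finally have "x ^ k * a = a" .
  moreover obtain k' where "k = Suc k'"
    using \<open>0 < k\<close> gr0_implies_Suc by blast
  ultimately have "a = x ^ k' * (x * a)"
    by (simp add: mult.assoc power_Suc2 del: power_Suc)
  then show ?thesis
    unfolding mem_Lideal_iff by blast
qed

lemma sandwiched_imp_mem_Rideal:
  fixes a x y :: "'a::{monoid_mult, finite}"
  assumes "a = x * a * y"
  shows "a \<in> Rideal (a * y)"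
proof -
  obtain i k where "0 < k" and period: "y ^ (i + k) = y ^ i"
    by (rule finite_power_period)
  have sandwich: "x ^ i * a * y ^ i = a"
    using power_sandwich[OF assms] by simp
  have "a * y ^ k = (x ^ i * a * y ^ i) * y ^ k"
    using sandwich by simp
  also have "\<dots> = x ^ i * a * y ^ (i + k)"
    by (simp only: power_add mult.assoc)
  also have "\<dots> = a"
    using period sandwich by simp
  finally have "a * y ^ k = a" .
  moreover obtain k' where "k = Suc k'"
    using \<open>0 < k\<close> gr0_implies_Suc by blast
  ultimately have "a = (a * y) * y ^ k'"
    by (simp add: mult.assoc)
  then show ?thesis
    unfolding mem_Rideal_iff by blast
qed

lemma greenJ_mult_left_imp_greenL:
  fixes a c :: "'a::{monoid_mult, finite}"
  assumes "greenJ (c * a) a"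
  shows "greenL (c * a) a"
proof -
  obtain x y where "a = x * (c * a) * y"
    using assms unfolding greenJ_iff mem_Jideal_iff by blast
  then have "a \<in> Lideal (x * c * a)"
    by (intro sandwiched_imp_mem_Lideal) (simp add: mult.assoc)
  then have "a \<in> Lideal (c * a)"
    unfolding mem_Lideal_iff by (metis mult.assoc)
  then show ?thesis
    unfolding greenL_iff mem_Lideal_iff by blast
qed

lemma greenJ_mult_right_imp_greenR:
  fixes a c :: "'a::{monoid_mult, finite}"
  assumes "greenJ (a * c) a"
  shows "greenR (a * c) a"
proof -
  obtain x y where "a = x * (a * c) * y"
    using assms unfolding greenJ_iff mem_Jideal_iff by blast
  then have "a \<in> Rideal (a * (c * y))"
    by (intro sandwiched_imp_mem_Rideal[of _ x]) (simp add: mult.assoc)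
  then have "a \<in> Rideal (a * c)"
    unfolding mem_Rideal_iff by (metis mult.assoc)
  then show ?thesis
    unfolding greenR_iff mem_Rideal_iff by blast
qed

lemma greenH_mult_left:
  fixes a b c :: "'a::{monoid_mult, finite}"
  assumes "greenH a b" and "greenJ (c * a) a"
  shows "greenH (c * a) (c * b)"
proof -
  have R: "greenR (c * a) (c * b)"
    using assms(1) greenR_mult_left unfolding greenH_def by blast
  have "greenJ (c * b) b"
    using assms greenR_imp_greenJ[OF R] greenL_imp_greenJ
    unfolding greenH_def greenJ_def by metis
  then have "greenL (c * a) a" "greenL (c * b) b"
    using assms(2) greenJ_mult_left_imp_greenL by blast+
  then show ?thesis
    using assms(1) R unfolding greenH_def greenL_def by simp
qed

lemma greenH_mult_right:
  fixes a b c :: "'a::{monoid_mult, finite}"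
  assumes "greenH a b" and "greenJ (a * c) a"
  shows "greenH (a * c) (b * c)"
proof -
  have L: "greenL (a * c) (b * c)"
    using assms(1) greenL_mult_right unfolding greenH_def by blast
  have "greenJ (b * c) b"
    using assms greenL_imp_greenJ[OF L] greenR_imp_greenJ
    unfolding greenH_def greenJ_def by metis
  then have "greenR (a * c) a" "greenR (b * c) b"
    using assms(2) greenJ_mult_right_imp_greenR by blast+
  then show ?thesis
    using assms(1) L unfolding greenH_def greenR_def by simp
qed

lemma mem_Jclass_iff: "a \<in> Jclass b \<longleftrightarrow> Jideal a = Jideal b"
  unfolding Jclass_def greenJ_def by auto

lemma Jclass_eq_iff: "Jclass a = Jclass b \<longleftrightarrow> Jideal a = Jideal b"
  unfolding Jclass_def greenJ_def by auto

lemma Jclass_le_Jclass_iff: "Jclass_le (Jclass a) (Jclass b) \<longleftrightarrow> Jideal a \<subseteq> Jideal b"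
  unfolding Jclass_le_def Jclass_eq_iff by auto

lemma mem_setA_Jclass_iff: "a \<in> setA (Jclass j) \<longleftrightarrow> Jideal a \<subset> Jideal j"
  unfolding setA_def Jclass_less_def Jclass_le_Jclass_iff Jclass_eq_iff by auto

lemma setA_subset_setB: "setA J \<subseteq> setB J"
  unfolding setA_def setB_def Jclass_less_def Jclass_le_def by (auto simp: Jclass_eq_iff mem_Jclass_iff)

lemma setA_disjoint: "setA J \<inter> J = {}"
  unfolding setA_def Jclass_less_def Jclass_le_def by (auto simp: mem_Jclass_iff Jclass_eq_iff)

lemma theta_subset_pi_rel: "theta J \<subseteq> pi_rel J"
  using setA_subset_setB unfolding theta_def pi_rel_def by blast

lemma equiv_theta: "equiv UNIV (theta J)"
  using setA_disjoint
  unfolding equiv_def refl_on_def sym_def trans_def theta_def greenH_def greenL_def greenR_def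
  by blast

lemma theta_mult_left:
  fixes a b c :: "'a::{monoid_mult, finite}"
  assumes "(a, b) \<in> theta (Jclass j)"
  shows "(c * a, c * b) \<in> theta (Jclass j)"
proof -
  have A_closed: "c * x \<in> setA (Jclass j)" if "x \<in> setA (Jclass j)" for x
    using that Jideal_mult_subset[of c x 1] unfolding mem_setA_Jclass_iff by auto
  consider "a = b" | "a \<in> setA (Jclass j)" "b \<in> setA (Jclass j)"
    | "a \<in> Jclass j" "b \<in> Jclass j" "greenH a b"
    using assms unfolding theta_def by blast
  then show ?thesis
  proof cases
    case 3
    have "greenJ (c * a) (c * b)"
      using \<open>greenH a b\<close> greenR_mult_left greenR_imp_greenJ unfolding greenH_def by blast
    show ?thesis
    proof (cases "greenJ (c * a) a")
      case True
      with \<open>greenH a b\<close> have "greenH (c * a) (c * b)"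
        by (rule greenH_mult_left)
      then show ?thesis
        using True 3 \<open>greenJ (c * a) (c * b)\<close> unfolding theta_def greenJ_def mem_Jclass_iff by simp
    next
      case False
      then have "Jideal (c * a) \<subset> Jideal j"
        using 3 Jideal_mult_subset[of c a 1] unfolding greenJ_def mem_Jclass_iff by auto
      then show ?thesis
        using \<open>greenJ (c * a) (c * b)\<close> unfolding theta_def greenJ_def mem_setA_Jclass_iff by simp
    qed
  qed (use A_closed in \<open>auto simp: theta_def\<close>)
qed

lemma theta_mult_right:
  fixes a b c :: "'a::{monoid_mult, finite}"
  assumes "(a, b) \<in> theta (Jclass j)"
  shows "(a * c, b * c) \<in> theta (Jclass j)"
proof -
  have A_closed: "x * c \<in> setA (Jclass j)" if "x \<in> setA (Jclass j)" for x
    using that Jideal_mult_subset[of 1 x c] unfolding mem_setA_Jclass_iff by auto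
  consider "a = b" | "a \<in> setA (Jclass j)" "b \<in> setA (Jclass j)"
    | "a \<in> Jclass j" "b \<in> Jclass j" "greenH a b"
    using assms unfolding theta_def by blast
  then show ?thesis
  proof cases
    case 3
    have "greenJ (a * c) (b * c)"
      using \<open>greenH a b\<close> greenL_mult_right greenL_imp_greenJ unfolding greenH_def by blast
    show ?thesis
    proof (cases "greenJ (a * c) a")
      case True
      with \<open>greenH a b\<close> have "greenH (a * c) (b * c)"
        by (rule greenH_mult_right)
      then show ?thesis
        using True 3 \<open>greenJ (a * c) (b * c)\<close> unfolding theta_def greenJ_def mem_Jclass_iff by simp
    next
      case False
      then have "Jideal (a * c) \<subset> Jideal j"
        using 3 Jideal_mult_subset[of 1 a c] unfolding greenJ_def mem_Jclass_iff by auto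
      then show ?thesis
        using \<open>greenJ (a * c) (b * c)\<close> unfolding theta_def greenJ_def mem_setA_Jclass_iff by simp
    qed
  qed (use A_closed in \<open>auto simp: theta_def\<close>)
qed

theorem lemma3p4:
  fixes J :: "'a::{monoid_mult, finite} set"
  assumes "is_Jclass J"
  shows "congruence (theta J) \<and> theta J \<subseteq> pi_rel J"
proof -
  obtain j where "J = Jclass j"
    using assms unfolding is_Jclass_def by blast
  then have "congruence (theta J)"
    unfolding congruence_def using equiv_theta theta_mult_left theta_mult_right by blast
  then show ?thesis
    using theta_subset_pi_rel by blast
qed

end
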